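(* Let $G=(V,E)$ be a multigraph (loops and parallel edges allowed) with $n$ vertices, $m$ edges and $c(G)$ components. Then $$P(\mathcal{H}_G,\lambda)=\lambda^{m-n+2c(G)}\cdot(-1)^{n+c(G)}\cdot T_G\!\left(1-\lambda^2,\tfrac{\lambda-1}{\lambda}\right).$$
   Context: A hypergraph $\mathcal{H}=(\mathcal{V},\mathcal{E})$ consists of a finite vertex set $\mathcal{V}$ and a set $\mathcal{E}$ of subsets of $\mathcal{V}$, each of size at least $1$, called edges. For a positive integer $\lambda$, a weak proper $\lambda$-colouring of $\mathcal{H}$ is a map $\phi:\mathcal{V}\to\{1,\dots,\lambda\}$ such that $|\{\phi(v):v\in e\}|>1$ for every $e\in\mathcal{E}$. $P(\mathcal{H},\lambda)$ denotes the number of weak proper $\lambda$-colourings of $\mathcal{H}$; it is a polynomial in $\lambda$ of degree $|\mathcal{V}|$. For a multigraph $G=(V,E)$, $\mathcal{H}_G$ is the hypergraph with vertex set $V\cup\{w_e:e\in E\}$ (the $w_e$ being distinct new vertices) and edge set $\{\{u_e,v_e,w_e\}: e\in E\}$, where $u_e,v_e$ are the ends of $e$ (so a loop $e$ at $u$ gives the edge $\{u,w_e\}$). The Tutte polynomial is $T_G(x,y)=\sum_{A\subseteq E}(x-1)^{r(E)-r(A)}(y-1)^{|A|-r(A)}$, where $r(A)=|V|-c(A)$ and $c(A)$ is the number of components of the spanning subgraph $(V,A)$; $c(G)=c(E)$. *)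

theory Defs
  imports Complex_Main "HOL-Library.FuncSet"
begin

text \<open>A multigraph is given by a finite vertex set V, a finite edge set E and a map
  ends assigning to each edge its (unordered, here stored as a pair) ends; a loop e has
  fst (ends e) = snd (ends e). Parallel edges are distinct elements of E with equal ends.\<close>

definition multigraph :: "'v set \<Rightarrow> 'e set \<Rightarrow> ('e \<Rightarrow> 'v \<times> 'v) \<Rightarrow> bool" where
  "multigraph V E ends \<longleftrightarrow> finite V \<and> finite E \<and>
     (\<forall>e\<in>E. fst (ends e) \<in> V \<and> snd (ends e) \<in> V)"

definition adj :: "('e \<Rightarrow> 'v \<times> 'v) \<Rightarrow> 'e set \<Rightarrow> ('v \<times> 'v) set" where
  "adj ends A = {(u, v). \<exists>e\<in>A. ends e = (u, v) \<or> ends e = (v, u)}"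

definition conn_rel :: "'v set \<Rightarrow> ('e \<Rightarrow> 'v \<times> 'v) \<Rightarrow> 'e set \<Rightarrow> ('v \<times> 'v) set" where
  "conn_rel V ends A = Id_on V \<union> (adj ends A \<inter> (V \<times> V))\<^sup>+"

definition ncomp :: "'v set \<Rightarrow> ('e \<Rightarrow> 'v \<times> 'v) \<Rightarrow> 'e set \<Rightarrow> nat" where
  "ncomp V ends A = card (V // conn_rel V ends A)"

definition rank :: "'v set \<Rightarrow> ('e \<Rightarrow> 'v \<times> 'v) \<Rightarrow> 'e set \<Rightarrow> nat" where
  "rank V ends A = card V - ncomp V ends A"

definition tutte :: "'v set \<Rightarrow> 'e set \<Rightarrow> ('e \<Rightarrow> 'v \<times> 'v) \<Rightarrow> real \<Rightarrow> real \<Rightarrow> real" where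
  "tutte V E ends x y =
     (\<Sum>A\<in>Pow E. (x - 1) ^ (rank V ends E - rank V ends A) *
                 (y - 1) ^ (card A - rank V ends A))"

definition chrom_hyp :: "'a set \<Rightarrow> 'a set set \<Rightarrow> nat \<Rightarrow> nat" where
  "chrom_hyp VH EH lam =
     card {\<phi> \<in> VH \<rightarrow>\<^sub>E {1..lam}. \<forall>e\<in>EH. card (\<phi> ` e) > 1}"

text \<open>The hypergraph H_G: vertices V plus a new vertex w_e = Inr e for each edge.\<close>

definition HG_vertices :: "'v set \<Rightarrow> 'e set \<Rightarrow> ('v + 'e) set" where
  "HG_vertices V E = Inl ` V \<union> Inr ` E"

definition HG_edges :: "'e set \<Rightarrow> ('e \<Rightarrow> 'v \<times> 'v) \<Rightarrow> ('v + 'e) set set" where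
  "HG_edges E ends = (\<lambda>e. {Inl (fst (ends e)), Inl (snd (ends e)), Inr e}) ` E"

end

theory Submission
  imports Defs
begin

text \<open>Colour \<open>H_G\<close> by first colouring \<open>V\<close> with \<open>f\<close> and then the new vertices \<open>w_e\<close>:
  each \<open>w_e\<close> has \<open>\<lambda>\<close> choices, except \<open>\<lambda> - 1\<close> when \<open>e\<close> is monochromatic under \<open>f\<close>.
  Hence \<open>P(H_G,\<lambda>) = \<Sum>\<^sub>f \<Prod>\<^sub>e (\<lambda> - [f u_e = f v_e])\<close>. Expanding the product over
  subsets \<open>X \<subseteq> E\<close> and counting the colourings of \<open>V\<close> that are constant on the components
  of \<open>(V,X)\<close> gives \<open>\<Sum>\<^sub>X (-1)^|X| \<lambda>^(m - |X| + c(X))\<close>. The subset expansion of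
  \<open>T_G\<close> at \<open>x - 1 = -\<lambda>\<^sup>2\<close>, \<open>y - 1 = -1/\<lambda>\<close> is the same sum term by term, since
  \<open>r(E) - r(X) = c(X) - c(G)\<close> and \<open>|X| - r(X) = |X| - n + c(X)\<close>.\<close>

lemma equiv_conn_rel: "equiv V (conn_rel V ends A)"
proof -
  let ?r = "adj ends A \<inter> V \<times> V"
  have "sym ?r" unfolding adj_def sym_def by blast
  then have "sym (?r\<^sup>+)" by (rule sym_trancl)
  moreover have "?r\<^sup>+ \<subseteq> V \<times> V" by (rule trancl_subset_Sigma) blast
  moreover have "trans (?r\<^sup>+)" by (rule trans_trancl)
  ultimately show ?thesis
    unfolding equiv_def conn_rel_def refl_on_def sym_def trans_def by blast
qed

lemma conn_rel_edge:
  assumes "e \<in> A" "fst (ends e) \<in> V" "snd (ends e) \<in> V"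
  shows "(fst (ends e), snd (ends e)) \<in> conn_rel V ends A"
  using assms unfolding conn_rel_def adj_def by (cases "ends e") auto

lemma edge_constant_imp_conn_rel_constant:
  assumes "\<forall>e\<in>A. f (fst (ends e)) = f (snd (ends e))" and "(x, y) \<in> conn_rel V ends A"
  shows "f x = f y"
proof -
  have edge: "f a = f b" if "(a, b) \<in> adj ends A" for a b
    using that assms(1) unfolding adj_def by (auto dest!: bspec)
  have "f x = f y" if "(x, y) \<in> (adj ends A \<inter> V \<times> V)\<^sup>+"
    using that by (induction rule: trancl_induct) (auto dest: edge)
  then show ?thesis
    using assms(2) unfolding conn_rel_def by auto
qed

lemma edge_constant_iff_conn_rel_constant:
  assumes "\<forall>e\<in>A. fst (ends e) \<in> V \<and> snd (ends e) \<in> V"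
  shows "(\<forall>e\<in>A. f (fst (ends e)) = f (snd (ends e))) \<longleftrightarrow>
         (\<forall>(x, y)\<in>conn_rel V ends A. f x = f y)"
  using assms edge_constant_imp_conn_rel_constant[of A f ends] conn_rel_edge[of _ A ends V]
  by fast

lemma card_PiE_class_constant:
  assumes R: "equiv V R" and "finite V"
  shows "card {f \<in> V \<rightarrow>\<^sub>E B. \<forall>(x, y)\<in>R. f x = f y} = card B ^ card (V // R)"
proof -
  define lift where "lift g = (\<lambda>x\<in>V. g (R `` {x}))" for g :: "'a set \<Rightarrow> 'b"
  have "inj_on lift (V // R \<rightarrow>\<^sub>E B)"
  proof (rule inj_onI)
    fix g g' assume g: "g \<in> V // R \<rightarrow>\<^sub>E B" and g': "g' \<in> V // R \<rightarrow>\<^sub>E B"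
      and lifts: "lift g = lift g'"
    have "g (R `` {x}) = g' (R `` {x})" if "x \<in> V" for x
      using fun_cong[OF lifts, of x] that unfolding lift_def by simp
    then show "g = g'"
      using g g' by (intro PiE_ext) (auto elim: quotientE)
  qed
  moreover have "lift ` (V // R \<rightarrow>\<^sub>E B) = {f \<in> V \<rightarrow>\<^sub>E B. \<forall>(x, y)\<in>R. f x = f y}"
  proof (intro equalityI subsetI)
    fix f assume "f \<in> lift ` (V // R \<rightarrow>\<^sub>E B)"
    then obtain g where g: "g \<in> V // R \<rightarrow>\<^sub>E B" and f: "f = lift g" by blast
    have "f x = f y" if "(x, y) \<in> R" for x y
      using that equiv_type[OF R] equiv_class_eq[OF R that] unfolding f lift_def by auto
    moreover have "f \<in> V \<rightarrow>\<^sub>E B"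
      using g unfolding f lift_def by (auto intro: quotientI)
    ultimately show "f \<in> {f \<in> V \<rightarrow>\<^sub>E B. \<forall>(x, y)\<in>R. f x = f y}" by blast
  next
    fix f assume f: "f \<in> {f \<in> V \<rightarrow>\<^sub>E B. \<forall>(x, y)\<in>R. f x = f y}"
    have class_value: "the_elem (f ` (R `` {x})) = f x" if "x \<in> V" for x
      using f R that by (intro the_elem_image_unique) (auto simp: equiv_def refl_on_def sym_def)
    have "f = lift (\<lambda>X\<in>V // R. the_elem (f ` X))"
      using f by (intro ext) (auto simp: lift_def quotientI class_value)
    moreover have "(\<lambda>X\<in>V // R. the_elem (f ` X)) \<in> V // R \<rightarrow>\<^sub>E B"
      using f by (auto elim!: quotientE simp: class_value)
    ultimately show "f \<in> lift ` (V // R \<rightarrow>\<^sub>E B)" by blast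
  qed
  ultimately have "card {f \<in> V \<rightarrow>\<^sub>E B. \<forall>(x, y)\<in>R. f x = f y} = card (V // R \<rightarrow>\<^sub>E B)"
    by (metis card_image)
  also have "\<dots> = card B ^ card (V // R)"
    using assms by (simp add: card_funcsetE finite_quotient equiv_type)
  finally show ?thesis .
qed

definition monochromatic_colourings ::
    "'v set \<Rightarrow> ('e \<Rightarrow> 'v \<times> 'v) \<Rightarrow> 'e set \<Rightarrow> nat \<Rightarrow> ('v \<Rightarrow> nat) set"
  where "monochromatic_colourings V ends A lam =
    {f \<in> V \<rightarrow>\<^sub>E {1..lam}. \<forall>e\<in>A. f (fst (ends e)) = f (snd (ends e))}"

lemma card_monochromatic_colourings:
  assumes "finite V" "\<forall>e\<in>A. fst (ends e) \<in> V \<and> snd (ends e) \<in> V"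
  shows "card (monochromatic_colourings V ends A lam) = lam ^ ncomp V ends A"
  using card_PiE_class_constant[OF equiv_conn_rel assms(1), where B = "{1..lam}"]
  unfolding monochromatic_colourings_def ncomp_def edge_constant_iff_conn_rel_constant[OF assms(2)]
  by simp

lemma finite_monochromatic_colourings:
  "finite V \<Longrightarrow> finite (monochromatic_colourings V ends A lam)"
  unfolding monochromatic_colourings_def by (simp add: finite_PiE)

text \<open>The bounds on \<open>ncomp\<close> below all come from comparing numbers of 2-colourings,
  \<open>ncomp V ends A\<close> being the base-2 logarithm of the number of 2-colourings in which every
  edge of \<open>A\<close> is monochromatic.\<close>

lemma ncomp_le_card:
  assumes "finite V" "\<forall>e\<in>A. fst (ends e) \<in> V \<and> snd (ends e) \<in> V"
  shows "ncomp V ends A \<le> card V"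
proof -
  have "card (monochromatic_colourings V ends A 2) \<le> card (V \<rightarrow>\<^sub>E {1..2::nat})"
    using assms(1) by (intro card_mono) (auto simp: monochromatic_colourings_def finite_PiE)
  then show ?thesis
    using assms by (simp add: card_monochromatic_colourings card_funcsetE)
qed

lemma ncomp_antimono:
  assumes "finite V" "\<forall>e\<in>A'. fst (ends e) \<in> V \<and> snd (ends e) \<in> V" "A \<subseteq> A'"
  shows "ncomp V ends A' \<le> ncomp V ends A"
proof -
  have "card (monochromatic_colourings V ends A' 2) \<le> card (monochromatic_colourings V ends A 2)"
    using assms by (intro card_mono finite_monochromatic_colourings)
      (auto simp: monochromatic_colourings_def)
  then show ?thesis
    using assms by (simp add: card_monochromatic_colourings subset_eq)
qed

lemma ncomp_le_ncomp_insert: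
  assumes "finite V" and ends: "\<forall>e'\<in>insert e A. fst (ends e') \<in> V \<and> snd (ends e') \<in> V"
  shows "ncomp V ends A \<le> Suc (ncomp V ends (insert e A))"
proof -
  define u where "u = fst (ends e)"
  define v where "v = snd (ends e)"
  define R where "R = conn_rel V ends A"
  txt \<open>Recolouring the \<open>A\<close>-component of \<open>v\<close> with the colour of \<open>u\<close> makes \<open>e\<close>
    monochromatic, and remembering the old colour of \<open>v\<close> makes this injective.\<close>
  define recolour where "recolour f = (\<lambda>x. if (v, x) \<in> R then f u else f x)"
    for f :: "'a \<Rightarrow> nat"
  have R: "equiv V R" unfolding R_def by (rule equiv_conn_rel)
  have "(recolour f, f v) \<in> monochromatic_colourings V ends (insert e A) 2 \<times> {1..2}"
    if f: "f \<in> monochromatic_colourings V ends A 2" for f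
  proof -
    have "recolour f (fst (ends e')) = recolour f (snd (ends e'))" if "e' \<in> A" for e'
    proof -
      have "(fst (ends e'), snd (ends e')) \<in> R"
        unfolding R_def using that ends by (intro conn_rel_edge) auto
      then have "(v, fst (ends e')) \<in> R \<longleftrightarrow> (v, snd (ends e')) \<in> R"
        using R unfolding equiv_def sym_def trans_def by blast
      then show ?thesis
        using f that unfolding recolour_def monochromatic_colourings_def by auto
    qed
    moreover have "recolour f u = recolour f v"
      using R ends unfolding recolour_def equiv_def refl_on_def v_def by auto
    moreover have "recolour f \<in> V \<rightarrow>\<^sub>E {1..2}"
    proof -
      have "(v, x) \<notin> R" if "x \<notin> V" for x
        using that equiv_type[OF R] by blast
      then show ?thesis
        using f ends unfolding recolour_def monochromatic_colourings_def u_def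
        by (auto simp: PiE_iff extensional_def)
    qed
    ultimately show ?thesis
      using f ends unfolding monochromatic_colourings_def u_def v_def by auto
  qed
  moreover have "inj_on (\<lambda>f. (recolour f, f v)) (monochromatic_colourings V ends A 2)"
  proof (rule inj_on_inverseI)
    fix f assume "f \<in> monochromatic_colourings V ends A 2"
    then have "f v = f x" if "(v, x) \<in> R" for x
      using that edge_constant_imp_conn_rel_constant[of A f ends v x V]
      unfolding R_def monochromatic_colourings_def by blast
    then show "(\<lambda>(g, c) x. if (v, x) \<in> R then c else g x) (recolour f, f v) = f"
      unfolding recolour_def by auto
  qed
  ultimately have "card (monochromatic_colourings V ends A 2)
      \<le> card (monochromatic_colourings V ends (insert e A) 2 \<times> {1..2::nat})"
    by (intro card_inj_on_le) (auto simp: finite_monochromatic_colourings assms(1))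
  then have "(2::nat) ^ ncomp V ends A \<le> 2 ^ Suc (ncomp V ends (insert e A))"
    using assms by (simp add: card_monochromatic_colourings card_cartesian_product)
  then show ?thesis
    by (rule power_le_imp_le_exp[rotated]) simp
qed

lemma card_le_card_edges_plus_ncomp:
  assumes "finite V" "finite A" "\<forall>e\<in>A. fst (ends e) \<in> V \<and> snd (ends e) \<in> V"
  shows "card V \<le> card A + ncomp V ends A"
  using assms(2,3)
proof (induction A rule: finite_induct)
  case empty
  have "ncomp V ends {} = card V"
    using card_monochromatic_colourings[OF assms(1), of "{}" ends 2] assms(1)
    by (simp add: monochromatic_colourings_def card_funcsetE)
  then show ?case by simp
next
  case (insert e A)
  then show ?case
    using ncomp_le_ncomp_insert[OF assms(1) insert.prems] by simp
qed

lemma prod_of_bool: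
  "finite A \<Longrightarrow> (\<Prod>x\<in>A. of_bool (P x)) = (of_bool (\<forall>x\<in>A. P x) :: 'a :: comm_semiring_1)"
  by (induction A rule: finite_induct) auto

lemma case_sum_in_PiE_iff:
  "case_sum f g \<in> Inl ` A \<union> Inr ` C \<rightarrow>\<^sub>E B \<longleftrightarrow> f \<in> A \<rightarrow>\<^sub>E B \<and> g \<in> C \<rightarrow>\<^sub>E B"
  unfolding PiE_iff extensional_def split_sum_all[of "\<lambda>x. x \<notin> _ \<longrightarrow> _ x = undefined"]
  by (auto simp: ball_Un)

lemma case_sum_proper_colouring_HG_iff:
  "case_sum f g \<in> {\<phi> \<in> HG_vertices V E \<rightarrow>\<^sub>E B. \<forall>h\<in>HG_edges E ends. 1 < card (\<phi> ` h)} \<longleftrightarrow>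
    f \<in> V \<rightarrow>\<^sub>E B \<and>
    g \<in> (\<Pi>\<^sub>E e\<in>E. B - (if f (fst (ends e)) = f (snd (ends e)) then {f (fst (ends e))} else {}))"
proof -
  have "(\<forall>h\<in>HG_edges E ends. 1 < card (case_sum f g ` h)) \<longleftrightarrow>
      (\<forall>e\<in>E. \<not> (f (fst (ends e)) = f (snd (ends e)) \<and> g e = f (fst (ends e))))"
    unfolding HG_edges_def by (auto simp: card_insert_if)
  moreover have "g \<in> (\<Pi>\<^sub>E e\<in>E. B - (if f (fst (ends e)) = f (snd (ends e))
      then {f (fst (ends e))} else {})) \<longleftrightarrow>
      g \<in> E \<rightarrow>\<^sub>E B \<and> (\<forall>e\<in>E. \<not> (f (fst (ends e)) = f (snd (ends e)) \<and> g e = f (fst (ends e))))"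
    unfolding PiE_iff by auto
  ultimately show ?thesis
    unfolding HG_vertices_def by (simp add: case_sum_in_PiE_iff)
qed

lemma chrom_hyp_HG_eq_sum:
  assumes "multigraph V E ends"
  shows "real (chrom_hyp (HG_vertices V E) (HG_edges E ends) lam) =
    (\<Sum>f\<in>V \<rightarrow>\<^sub>E {1..lam}. \<Prod>e\<in>E. real lam - of_bool (f (fst (ends e)) = f (snd (ends e))))"
proof -
  have fin: "finite V" "finite E"
    and ends: "\<And>e. e \<in> E \<Longrightarrow> fst (ends e) \<in> V \<and> snd (ends e) \<in> V"
    using assms unfolding multigraph_def by auto
  define B where "B = {1..lam}"
  define K where "K f e = B - (if f (fst (ends e)) = f (snd (ends e)) then {f (fst (ends e))} else {})"
    for f :: "'a \<Rightarrow> nat" and e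
  define S where "S = (SIGMA f:V \<rightarrow>\<^sub>E B. PiE E (K f))"
  define join where "join = (\<lambda>(f :: 'a \<Rightarrow> nat, g :: 'b \<Rightarrow> nat). case_sum f g)"
  define proper where "proper = {\<phi> \<in> HG_vertices V E \<rightarrow>\<^sub>E B. \<forall>h\<in>HG_edges E ends. 1 < card (\<phi> ` h)}"
  have proper_iff: "join (f, g) \<in> proper \<longleftrightarrow> (f, g) \<in> S" for f g
    unfolding join_def proper_def S_def K_def
    by (simp only: case_prod_conv mem_Sigma_iff case_sum_proper_colouring_HG_iff)
  have "proper = join ` S"
  proof (intro equalityI subsetI)
    fix \<phi> assume "\<phi> \<in> proper"
    moreover have "\<phi> = join (\<phi> \<circ> Inl, \<phi> \<circ> Inr)"
      unfolding join_def by (auto split: sum.split)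
    ultimately show "\<phi> \<in> join ` S"
      using proper_iff by (metis image_eqI)
  qed (use proper_iff in auto)
  moreover have "inj_on join S"
    by (rule inj_on_inverseI[where g = "\<lambda>\<phi>. (\<phi> \<circ> Inl, \<phi> \<circ> Inr)"]) (auto simp: join_def)
  ultimately have "chrom_hyp (HG_vertices V E) (HG_edges E ends) lam = card S"
    unfolding chrom_hyp_def proper_def B_def by (simp add: card_image)
  also have "\<dots> = (\<Sum>f\<in>V \<rightarrow>\<^sub>E B. \<Prod>e\<in>E. card (K f e))"
    unfolding S_def using fin by (simp add: card_PiE finite_PiE K_def B_def)
  finally have "real (chrom_hyp (HG_vertices V E) (HG_edges E ends) lam) =
      (\<Sum>f\<in>V \<rightarrow>\<^sub>E B. \<Prod>e\<in>E. real (card (K f e)))"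
    by simp
  also have "\<dots> = (\<Sum>f\<in>V \<rightarrow>\<^sub>E B. \<Prod>e\<in>E. real lam - of_bool (f (fst (ends e)) = f (snd (ends e))))"
  proof (intro sum.cong prod.cong refl)
    fix f e assume "f \<in> V \<rightarrow>\<^sub>E B" "e \<in> E"
    then have "f (fst (ends e)) \<in> B" using ends by blast
    then show "real (card (K f e)) = real lam - of_bool (f (fst (ends e)) = f (snd (ends e)))"
      unfolding K_def B_def by (auto simp: of_nat_diff)
  qed
  finally show ?thesis unfolding B_def .
qed

lemma chrom_hyp_HG_subgraph_expansion:
  assumes "multigraph V E ends"
  shows "real (chrom_hyp (HG_vertices V E) (HG_edges E ends) lam) =
    (\<Sum>X\<in>Pow E. (-1) ^ card X * real lam ^ (card E - card X + ncomp V ends X))"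
proof -
  have fin: "finite V" "finite E" and ends: "\<forall>e\<in>E. fst (ends e) \<in> V \<and> snd (ends e) \<in> V"
    using assms unfolding multigraph_def by auto
  define mono where "mono f e \<longleftrightarrow> f (fst (ends e)) = f (snd (ends e))"
    for f :: "'a \<Rightarrow> nat" and e
  have "real (chrom_hyp (HG_vertices V E) (HG_edges E ends) lam) =
      (\<Sum>f\<in>V \<rightarrow>\<^sub>E {1..lam}. \<Prod>e\<in>E. real lam - of_bool (mono f e))"
    unfolding mono_def by (rule chrom_hyp_HG_eq_sum[OF assms])
  also have "\<dots> = (\<Sum>f\<in>V \<rightarrow>\<^sub>E {1..lam}. \<Sum>X\<in>Pow E.
      (-1) ^ card X * of_bool (\<forall>e\<in>X. mono f e) * real lam ^ (card E - card X))"
  proof (intro sum.cong refl)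
    fix f
    have "(\<Prod>e\<in>X. of_bool (mono f e)) * (\<Prod>e\<in>E - X. real lam) =
        of_bool (\<forall>e\<in>X. mono f e) * real lam ^ (card E - card X)" if "X \<subseteq> E" for X
      using that fin(2) finite_subset[OF that fin(2)] by (simp add: prod_of_bool card_Diff_subset)
    then show "(\<Prod>e\<in>E. real lam - of_bool (mono f e)) = (\<Sum>X\<in>Pow E.
        (-1) ^ card X * of_bool (\<forall>e\<in>X. mono f e) * real lam ^ (card E - card X))"
      unfolding prod_diff_conv_sum[OF fin(2)] by (intro sum.cong refl) (simp add: mult.assoc)
  qed
  also have "\<dots> = (\<Sum>X\<in>Pow E. (-1) ^ card X * real lam ^ (card E - card X) *
      (\<Sum>f\<in>V \<rightarrow>\<^sub>E {1..lam}. of_bool (\<forall>e\<in>X. mono f e)))"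
    by (subst sum.swap) (simp add: sum_distrib_left mult_ac)
  also have "\<dots> = (\<Sum>X\<in>Pow E. (-1) ^ card X * real lam ^ (card E - card X) *
      real (card (monochromatic_colourings V ends X lam)))"
    using fin unfolding monochromatic_colourings_def mono_def
    by (simp add: finite_PiE Int_def)
  also have "\<dots> = (\<Sum>X\<in>Pow E. (-1) ^ card X * real lam ^ (card E - card X + ncomp V ends X))"
  proof (intro sum.cong refl)
    fix X assume "X \<in> Pow E"
    then have "\<forall>e\<in>X. fst (ends e) \<in> V \<and> snd (ends e) \<in> V" using ends by blast
    then show "(-1) ^ card X * real lam ^ (card E - card X) *
        real (card (monochromatic_colourings V ends X lam)) =
        (-1) ^ card X * real lam ^ (card E - card X + ncomp V ends X)"
      by (simp add: card_monochromatic_colourings[OF fin(1)] power_add)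
  qed
  finally show ?thesis .
qed

text \<open>One summand of the Tutte polynomial: \<open>n, m, c, k, cX\<close> play the roles of
  \<open>|V|, |E|, c(G), |X|, c(X)\<close>, so that the exponents are \<open>r(E) - r(X)\<close> and \<open>|X| - r(X)\<close>.\<close>

lemma tutte_summand_eq:
  fixes x :: real
  assumes "x \<noteq> 0" "c \<le> cX" "cX \<le> n" "n \<le> k + cX" "n \<le> m + c" "k \<le> m"
  shows "x ^ (m + 2 * c - n) * (-1) ^ (n + c) *
      ((1 - x\<^sup>2 - 1) ^ ((n - c) - (n - cX)) * ((x - 1) / x - 1) ^ (k - (n - cX)))
    = (-1) ^ k * x ^ (m - k + cX)"
proof -
  define a where "a = cX - c"
  define b where "b = k + cX - n"
  have exps: "(n - c) - (n - cX) = a" "k - (n - cX) = b"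
      "m + 2 * c - n + 2 * a = (m - k + cX) + b" "n + c + a + b = k + 2 * cX"
    using assms(2-6) unfolding a_def b_def by linarith+
  have "x ^ (m + 2 * c - n) * (-1) ^ (n + c) *
      ((1 - x\<^sup>2 - 1) ^ ((n - c) - (n - cX)) * ((x - 1) / x - 1) ^ (k - (n - cX)))
    = (-1) ^ (n + c + a + b) * x ^ (m + 2 * c - n + 2 * a) / x ^ b"
  proof -
    have "(1 - x\<^sup>2 - 1) ^ a = (-1) ^ a * x ^ (2 * a)"
      by (simp add: power_minus[of "x\<^sup>2"] power_mult)
    moreover have "((x - 1) / x - 1) ^ b = (-1) ^ b / x ^ b"
      using assms(1) by (simp add: diff_divide_distrib power_minus[of "1 / x"] power_one_over)
    ultimately show ?thesis
      unfolding exps(1,2) by (simp add: power_add)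
  qed
  also have "\<dots> = (-1) ^ k * x ^ (m - k + cX)"
    using assms(1) unfolding exps(3,4) by (simp add: power_add power_mult)
  finally show ?thesis .
qed

lemma tutte_eval_eq_subgraph_sum:
  fixes x :: real
  assumes "multigraph V E ends" "x \<noteq> 0"
  shows "x ^ (card E + 2 * ncomp V ends E - card V) * (-1) ^ (card V + ncomp V ends E) *
      tutte V E ends (1 - x\<^sup>2) ((x - 1) / x) =
    (\<Sum>X\<in>Pow E. (-1) ^ card X * x ^ (card E - card X + ncomp V ends X))"
proof -
  have fin: "finite V" "finite E" and ends: "\<forall>e\<in>E. fst (ends e) \<in> V \<and> snd (ends e) \<in> V"
    using assms(1) unfolding multigraph_def by auto
  have "x ^ (card E + 2 * ncomp V ends E - card V) * (-1) ^ (card V + ncomp V ends E) *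
      ((1 - x\<^sup>2 - 1) ^ ((card V - ncomp V ends E) - (card V - ncomp V ends X)) *
       ((x - 1) / x - 1) ^ (card X - (card V - ncomp V ends X))) =
    (-1) ^ card X * x ^ (card E - card X + ncomp V ends X)" if "X \<subseteq> E" for X
  proof (rule tutte_summand_eq[OF assms(2)])
    have ends_X: "\<forall>e\<in>X. fst (ends e) \<in> V \<and> snd (ends e) \<in> V" using that ends by blast
    show "ncomp V ends E \<le> ncomp V ends X"
      using ncomp_antimono[OF fin(1) ends that] .
    show "ncomp V ends X \<le> card V"
      using ncomp_le_card[OF fin(1) ends_X] .
    show "card V \<le> card X + ncomp V ends X"
      using card_le_card_edges_plus_ncomp[OF fin(1) finite_subset[OF that fin(2)] ends_X] .
    show "card V \<le> card E + ncomp V ends E"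
      using card_le_card_edges_plus_ncomp[OF fin ends] .
    show "card X \<le> card E"
      using card_mono[OF fin(2) that] .
  qed
  then show ?thesis
    unfolding tutte_def rank_def sum_distrib_left by (intro sum.cong refl) auto
qed

theorem theorem2:
  fixes V :: "'v set" and E :: "'e set" and ends :: "'e \<Rightarrow> 'v \<times> 'v" and lam :: nat
  assumes "multigraph V E ends"
    and "lam \<ge> 1"
  shows "real (chrom_hyp (HG_vertices V E) (HG_edges E ends) lam) =
           real lam ^ (card E + 2 * ncomp V ends E - card V) *
           (-1) ^ (card V + ncomp V ends E) *
           tutte V E ends (1 - real lam ^ 2) ((real lam - 1) / real lam)"
  using chrom_hyp_HG_subgraph_expansion[OF assms(1)]
    tutte_eval_eq_subgraph_sum[OF assms(1), of "real lam"] assms(2)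
  by simp

end
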